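(* Let $\phi\ge1$ and let $w_1,\ldots,w_n$ be independent random variables, each $w_i$ uniformly distributed on an arbitrary interval $A_i\subseteq[0,1]$ of length $1/\phi$. For $k\in\mathbb{N}$ let $\mathcal{F}_k$ denote the event that there exist two different vectors $x,y\in\{0,1\}^n$ with $|w^{\mathsf T}x-w^{\mathsf T}y|\le n/k$. Then for every $k\in\mathbb{N}$, $\Pr[\mathcal{F}_k]\le \frac{2^{2n+1}n\phi}{k}$. *)

theory Defs
  imports "HOL-Probability.Probability"
begin

end

theory Submission
  imports Defs
begin

(* Union bound over the fewer than 4^n pairs of distinct 0/1 vectors x, y. For a fixed pair choose
   a coordinate j with x j \<noteq> y j; then w\<^sup>T x - w\<^sup>T y = \<plusminus>w j + (terms not involving w j), so by
   Fubini the event confines w j, for any fixed values of the other weights, to an interval of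
   length 2n/k, which has probability at most 2n\<phi>/k under the uniform density \<phi> of w j. *)

lemma emeasure_uniform_measure_Icc_le:
  fixes a b c d :: real
  assumes "a < b"
  shows "emeasure (uniform_measure lborel {a..b}) {c..d} \<le> ennreal ((d - c) / (b - a))"
proof (cases "c \<le> d")
  case True
  have "emeasure (uniform_measure lborel {a..b}) {c..d}
      = emeasure lborel ({a..b} \<inter> {c..d}) / emeasure lborel {a..b}"
    by simp
  also have "\<dots> \<le> emeasure lborel {c..d} / emeasure lborel {a..b}"
    by (intro divide_right_mono_ennreal emeasure_mono) auto
  also have "\<dots> = ennreal ((d - c) / (b - a))"
    using assms True by (simp add: divide_ennreal)
  finally show ?thesis .
qed simp

lemma emeasure_PiM_le_if_sections_covered:
  fixes M :: "'i \<Rightarrow> 'a measure"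
  assumes prob: "\<And>i. prob_space (M i)"
    and I: "finite I" "j \<in> I" and B: "B \<in> sets (PiM I M)"
    and sections: "\<And>x. \<exists>A \<in> sets (M j). emeasure (M j) A \<le> \<epsilon> \<and> (\<forall>y. x(j := y) \<in> B \<longrightarrow> y \<in> A)"
  shows "emeasure (PiM I M) B \<le> \<epsilon>"
proof -
  interpret product_prob_space M I
    using prob by (auto simp: product_prob_space_def product_prob_space_axioms_def
      product_sigma_finite_def prob_space_imp_sigma_finite)
  define J where "J = I - {j}"
  have I_eq: "I = insert j J" and J: "finite J" "j \<notin> J"
    using I by (auto simp: J_def)
  have "emeasure (PiM I M) B = (\<integral>\<^sup>+ v. indicator B v \<partial>PiM (insert j J) M)"
    using B I_eq by simp
  also have "\<dots> = (\<integral>\<^sup>+ x. (\<integral>\<^sup>+ y. indicator B (x(j := y)) \<partial>M j) \<partial>PiM J M)"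
    using B I_eq J by (intro product_nn_integral_insert) auto
  also have "\<dots> \<le> (\<integral>\<^sup>+ x. \<epsilon> \<partial>PiM J M)"
  proof (intro nn_integral_mono)
    fix x
    obtain A where A: "A \<in> sets (M j)" "emeasure (M j) A \<le> \<epsilon>" "\<And>y. x(j := y) \<in> B \<Longrightarrow> y \<in> A"
      using sections by blast
    have "(\<integral>\<^sup>+ y. indicator B (x(j := y)) \<partial>M j) \<le> (\<integral>\<^sup>+ y. indicator A y \<partial>M j)"
      using A(3) by (intro nn_integral_mono) (auto simp: indicator_def)
    also have "\<dots> \<le> \<epsilon>"
      using A(1,2) by simp
    finally show "(\<integral>\<^sup>+ y. indicator B (x(j := y)) \<partial>M j) \<le> \<epsilon>" .
  qed
  also have "\<dots> = \<epsilon>"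
    using prob_space.emeasure_space_1[OF prob_space_PiM[of J M]] prob by simp
  finally show ?thesis .
qed

lemma sets_PiM_abs_sum_diff_le:
  fixes M :: "'i \<Rightarrow> real measure" and c d :: "'i \<Rightarrow> real"
  assumes "\<And>i. sets (M i) = sets borel"
  shows "{v \<in> I \<rightarrow>\<^sub>E UNIV. \<bar>(\<Sum>i\<in>I. v i * c i) - (\<Sum>i\<in>I. v i * d i)\<bar> \<le> t} \<in> sets (PiM I M)"
proof -
  have "sets (PiM I M) = sets (PiM I (\<lambda>_. borel))"
    using assms by (intro sets_PiM_cong) auto
  moreover have "{v \<in> space (PiM I (\<lambda>_. borel)).
      \<bar>(\<Sum>i\<in>I. v i * c i) - (\<Sum>i\<in>I. v i * d i)\<bar> \<le> t} \<in> sets (PiM I (\<lambda>_. borel))"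
    by measurable
  ultimately show ?thesis
    by (simp add: space_PiM)
qed

lemma emeasure_PiM_abs_linear_form_le:
  fixes M :: "'i \<Rightarrow> real measure" and c :: "'i \<Rightarrow> real"
  assumes prob: "\<And>i. prob_space (M i)" and sets_M: "\<And>i. sets (M i) = sets borel"
    and I: "finite I" "j \<in> I" and c_j: "\<bar>c j\<bar> = 1"
    and small_ball: "\<And>s. emeasure (M j) {s - t .. s + t} \<le> \<epsilon>"
  shows "emeasure (PiM I M) {v \<in> I \<rightarrow>\<^sub>E UNIV. \<bar>\<Sum>i\<in>I. v i * c i\<bar> \<le> t} \<le> \<epsilon>"
proof (rule emeasure_PiM_le_if_sections_covered[OF prob I])
  show "{v \<in> I \<rightarrow>\<^sub>E UNIV. \<bar>\<Sum>i\<in>I. v i * c i\<bar> \<le> t} \<in> sets (PiM I M)"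
    using sets_PiM_abs_sum_diff_le[OF sets_M, of I c "\<lambda>_. 0" t] by simp
next
  fix x :: "'i \<Rightarrow> real"
  define s where "s = (\<Sum>i\<in>I - {j}. x i * c i)"
  define r where "r = - s * c j"
  have "(\<Sum>i\<in>I. (x(j := y)) i * c i) = y * c j + s" for y
    using I by (simp add: s_def sum.remove)
  with c_j have "\<bar>\<Sum>i\<in>I. (x(j := y)) i * c i\<bar> \<le> t \<Longrightarrow> y \<in> {r - t .. r + t}" for y
    by (auto simp: r_def abs_le_iff abs_if split: if_splits)
  then show "\<exists>A \<in> sets (M j). emeasure (M j) A \<le> \<epsilon> \<and>
      (\<forall>y. x(j := y) \<in> {v \<in> I \<rightarrow>\<^sub>E UNIV. \<bar>\<Sum>i\<in>I. v i * c i\<bar> \<le> t} \<longrightarrow> y \<in> A)"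
    using small_ball[of r] sets_M by (intro bexI[of _ "{r - t .. r + t}"]) auto
qed

lemma emeasure_PiM_subset_sums_diff_le:
  fixes M :: "'i \<Rightarrow> real measure" and x y :: "'i \<Rightarrow> nat"
  assumes prob: "\<And>i. prob_space (M i)" and sets_M: "\<And>i. sets (M i) = sets borel"
    and "finite I" and x: "x \<in> I \<rightarrow>\<^sub>E {0, 1}" and y: "y \<in> I \<rightarrow>\<^sub>E {0, 1}" and "x \<noteq> y"
    and small_ball: "\<And>j s. j \<in> I \<Longrightarrow> emeasure (M j) {s - t .. s + t} \<le> \<epsilon>"
  shows "emeasure (PiM I M) {v \<in> I \<rightarrow>\<^sub>E UNIV.
           \<bar>(\<Sum>i\<in>I. v i * real (x i)) - (\<Sum>i\<in>I. v i * real (y i))\<bar> \<le> t} \<le> \<epsilon>"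
proof -
  obtain j where "x j \<noteq> y j"
    using \<open>x \<noteq> y\<close> by auto
  then have j: "j \<in> I"
    using x y by (metis PiE_arb)
  define c where "c i = real (x i) - real (y i)" for i
  have "x j \<in> {0, 1}" "y j \<in> {0, 1}"
    using x y j by auto
  then have c_j: "\<bar>c j\<bar> = 1"
    using \<open>x j \<noteq> y j\<close> by (auto simp: c_def)
  have "emeasure (PiM I M) {v \<in> I \<rightarrow>\<^sub>E UNIV. \<bar>\<Sum>i\<in>I. v i * c i\<bar> \<le> t} \<le> \<epsilon>"
    using prob sets_M \<open>finite I\<close> j c_j small_ball[OF j] by (rule emeasure_PiM_abs_linear_form_le)
  moreover have "(\<Sum>i\<in>I. v i * real (x i)) - (\<Sum>i\<in>I. v i * real (y i)) = (\<Sum>i\<in>I. v i * c i)" for v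
    by (simp add: c_def sum_subtractf right_diff_distrib)
  ultimately show ?thesis
    by (simp only:)
qed

definition close_subset_sums :: "'i set \<Rightarrow> real \<Rightarrow> ('i \<Rightarrow> real) set" where
  "close_subset_sums I t = {v \<in> I \<rightarrow>\<^sub>E UNIV. \<exists>x \<in> I \<rightarrow>\<^sub>E {0::nat, 1}. \<exists>y \<in> I \<rightarrow>\<^sub>E {0, 1}.
     x \<noteq> y \<and> \<bar>(\<Sum>i\<in>I. v i * real (x i)) - (\<Sum>i\<in>I. v i * real (y i))\<bar> \<le> t}"

lemma close_subset_sums_eq_UN:
  "close_subset_sums I t = (\<Union>(x, y) \<in> {(x, y) \<in> (I \<rightarrow>\<^sub>E {0, 1}) \<times> (I \<rightarrow>\<^sub>E {0, 1}). x \<noteq> y}.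
     {v \<in> I \<rightarrow>\<^sub>E UNIV. \<bar>(\<Sum>i\<in>I. v i * real (x i)) - (\<Sum>i\<in>I. v i * real (y i))\<bar> \<le> t})"
  by (auto simp: close_subset_sums_def)

lemma finite_distinct_pairs_01_vectors:
  "finite I \<Longrightarrow> finite {(x, y) \<in> (I \<rightarrow>\<^sub>E {0::nat, 1}) \<times> (I \<rightarrow>\<^sub>E {0, 1}). x \<noteq> y}"
  by (auto intro: finite_subset[OF _ finite_cartesian_product] finite_PiE)

lemma sets_close_subset_sums:
  fixes M :: "'i \<Rightarrow> real measure"
  assumes "finite I" and "\<And>i. sets (M i) = sets borel"
  shows "close_subset_sums I t \<in> sets (PiM I M)"
  unfolding close_subset_sums_eq_UN
  by (rule sets.finite_UN[OF finite_distinct_pairs_01_vectors[OF \<open>finite I\<close>]])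
    (simp add: sets_PiM_abs_sum_diff_le[OF assms(2)] split: prod.split)

lemma measure_PiM_close_subset_sums_le:
  fixes M :: "'i \<Rightarrow> real measure"
  assumes prob: "\<And>i. prob_space (M i)" and sets_M: "\<And>i. sets (M i) = sets borel"
    and "finite I" and "\<epsilon> \<ge> 0"
    and small_ball: "\<And>j s. j \<in> I \<Longrightarrow> emeasure (M j) {s - t .. s + t} \<le> ennreal \<epsilon>"
  shows "measure (PiM I M) (close_subset_sums I t) \<le> 4 ^ card I * \<epsilon>"
proof -
  interpret prob_space "PiM I M"
    using prob by (rule prob_space_PiM)
  define S where "S = I \<rightarrow>\<^sub>E {0::nat, 1}"
  define D where "D = {(x, y) \<in> S \<times> S. x \<noteq> y}"
  define L where "L = (\<lambda>(x, y). {v \<in> I \<rightarrow>\<^sub>E UNIV.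
    \<bar>(\<Sum>i\<in>I. v i * real (x i)) - (\<Sum>i\<in>I. v i * real (y i))\<bar> \<le> t})"
  have "finite D"
    unfolding D_def S_def using \<open>finite I\<close> by (rule finite_distinct_pairs_01_vectors)
  have L_le: "measure (PiM I M) (L p) \<le> \<epsilon>" if "p \<in> D" for p
  proof -
    obtain x y where p: "p = (x, y)" and "x \<in> S" "y \<in> S" "x \<noteq> y"
      using \<open>p \<in> D\<close> by (auto simp: D_def)
    then have "emeasure (PiM I M) (L p) \<le> ennreal \<epsilon>"
      unfolding p L_def S_def case_prod_conv
      using prob sets_M \<open>finite I\<close> small_ball by (intro emeasure_PiM_subset_sums_diff_le)
    then show ?thesis
      using \<open>\<epsilon> \<ge> 0\<close> by (simp add: emeasure_eq_measure)
  qed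
  have "measure (PiM I M) (close_subset_sums I t) = measure (PiM I M) (\<Union>p\<in>D. L p)"
    by (simp only: close_subset_sums_eq_UN L_def D_def S_def)
  also have "\<dots> \<le> (\<Sum>p\<in>D. measure (PiM I M) (L p))"
    using \<open>finite D\<close> sets_PiM_abs_sum_diff_le[OF sets_M]
    by (intro finite_measure_subadditive_finite) (auto simp: L_def)
  also have "\<dots> \<le> real (card D) * \<epsilon>"
    using L_le by (rule sum_bounded_above)
  also have "\<dots> \<le> real (card (S \<times> S)) * \<epsilon>"
    unfolding D_def using \<open>finite I\<close> \<open>\<epsilon> \<ge> 0\<close>
    by (intro mult_right_mono of_nat_mono card_mono finite_cartesian_product) (auto simp: S_def finite_PiE)
  also have "\<dots> = 4 ^ card I * \<epsilon>"
    using \<open>finite I\<close> by (simp add: S_def card_cartesian_product card_PiE power_mult_distrib[symmetric])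
  finally show ?thesis .
qed

lemma measure_PiM_uniform_close_subset_sums_le:
  fixes a :: "'i \<Rightarrow> real"
  assumes "finite I" and "h > 0" and "t \<ge> 0"
  shows "measure (PiM I (\<lambda>i. uniform_measure lborel {a i .. a i + h})) (close_subset_sums I t)
    \<le> 4 ^ card I * (2 * t / h)"
proof (rule measure_PiM_close_subset_sums_le)
  show "prob_space (uniform_measure lborel {a i .. a i + h})" for i
    using \<open>h > 0\<close> by (intro prob_space_uniform_measure) auto
  show "emeasure (uniform_measure lborel {a j .. a j + h}) {s - t .. s + t} \<le> ennreal (2 * t / h)" for j s
    using emeasure_uniform_measure_Icc_le[of "a j" "a j + h" "s - t" "s + t"] \<open>h > 0\<close> by simp
qed (use assms in simp_all)

lemma (in prob_space) measure_indep_vars_restrict_eq: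
  assumes "indep_vars N X I" and "I \<noteq> {}" and A: "A \<in> sets (PiM I N)"
  shows "measure M {\<omega> \<in> space M. (\<lambda>i\<in>I. X i \<omega>) \<in> A} = measure (PiM I (\<lambda>i. distr M (N i) (X i))) A"
proof -
  define Y where "Y \<omega> = (\<lambda>i\<in>I. X i \<omega>)" for \<omega>
  have rv: "\<And>i. i \<in> I \<Longrightarrow> random_variable (N i) (X i)"
    using assms(1) by (auto simp: indep_vars_def)
  then have "Y \<in> measurable M (PiM I N)"
    unfolding Y_def by (intro measurable_restrict) auto
  then have "measure M (Y -` A \<inter> space M) = measure (distr M (PiM I N) Y) A"
    using A by (simp add: measure_distr)
  also have "distr M (PiM I N) Y = PiM I (\<lambda>i. distr M (N i) (X i))"
    using assms rv unfolding Y_def by (simp add: indep_vars_iff_distr_eq_PiM')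
  also have "Y -` A \<inter> space M = {\<omega> \<in> space M. (\<lambda>i\<in>I. X i \<omega>) \<in> A}"
    by (auto simp: Y_def)
  finally show ?thesis .
qed

theorem lemma2p3:
  fixes M :: "'s measure" and w :: "nat \<Rightarrow> 's \<Rightarrow> real"
    and a :: "nat \<Rightarrow> real" and \<phi> :: real and n k :: nat
  assumes "prob_space M"
    and "\<phi> \<ge> 1"
    and "prob_space.indep_vars M (\<lambda>_. borel) w {..<n}"
    and "\<And>i. i < n \<Longrightarrow> 0 \<le> a i \<and> a i + 1 / \<phi> \<le> 1"
    and "\<And>i. i < n \<Longrightarrow>
           distr M lborel (w i) = uniform_measure lborel {a i .. a i + 1 / \<phi>}"
    and "k \<ge> 1"
  shows "measure M {\<omega> \<in> space M. \<exists>x \<in> {..<n} \<rightarrow>\<^sub>E {0::nat, 1}. \<exists>y \<in> {..<n} \<rightarrow>\<^sub>E {0, 1}.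
            x \<noteq> y \<and>
            \<bar>(\<Sum>i<n. w i \<omega> * real (x i)) - (\<Sum>i<n. w i \<omega> * real (y i))\<bar> \<le> real n / real k}
         \<le> 2 ^ (2 * n + 1) * real n * \<phi> / real k"
proof (cases "n = 0")
  case False
  interpret prob_space M by fact
  define U where "U = (\<lambda>i. uniform_measure lborel {a i .. a i + 1 / \<phi>})"
  define t where "t = real n / real k"
  have "distr M borel (w i) = distr M lborel (w i)" for i
    by (rule distr_cong) auto
  then have distr_w: "PiM {..<n} (\<lambda>i. distr M borel (w i)) = PiM {..<n} U"
    using assms(5) by (intro PiM_cong) (auto simp: U_def)
  have sets_close: "close_subset_sums {..<n} t \<in> sets (PiM {..<n} (\<lambda>_. borel))"
    by (rule sets_close_subset_sums) auto
  have "measure M {\<omega> \<in> space M. \<exists>x \<in> {..<n} \<rightarrow>\<^sub>E {0::nat, 1}. \<exists>y \<in> {..<n} \<rightarrow>\<^sub>E {0, 1}.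
            x \<noteq> y \<and> \<bar>(\<Sum>i<n. w i \<omega> * real (x i)) - (\<Sum>i<n. w i \<omega> * real (y i))\<bar> \<le> t}
      = measure M {\<omega> \<in> space M. (\<lambda>i\<in>{..<n}. w i \<omega>) \<in> close_subset_sums {..<n} t}"
    by (auto simp: close_subset_sums_def intro!: arg_cong[where f="measure M"])
  also have "\<dots> = measure (PiM {..<n} U) (close_subset_sums {..<n} t)"
    using measure_indep_vars_restrict_eq[OF \<open>indep_vars (\<lambda>_. borel) w {..<n}\<close> _ sets_close] \<open>n \<noteq> 0\<close>
    by (simp add: distr_w lessThan_empty_iff)
  also have "\<dots> \<le> 4 ^ n * (2 * t / (1 / \<phi>))"
    using measure_PiM_uniform_close_subset_sums_le[of "{..<n}" "1 / \<phi>" t a] \<open>\<phi> \<ge> 1\<close>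
    by (simp add: U_def t_def)
  also have "\<dots> = 2 ^ (2 * n + 1) * real n * \<phi> / real k"
    by (simp add: t_def power_add power_mult)
  finally show ?thesis
    unfolding t_def .
qed simp

end
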